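(* Fix an integer $m\geq 2$. Let $\Gamma$ be a geometric distance-regular graph with smallest eigenvalue $-m$, diameter $D\geq 2$ and intersection number $c_2$. If $c_2\geq 2$, then $D<m^2$.
   Context: A finite connected graph $\Gamma$ with diameter $D$ is distance-regular if there are integers $b_i,c_i$ ($0\le i\le D$) such that for any vertices $x,y$ with $d(x,y)=i$, exactly $c_i$ neighbours of $y$ are at distance $i-1$ from $x$ and exactly $b_i$ neighbours of $y$ are at distance $i+1$ from $x$; its valency is $k=b_0$. The smallest eigenvalue $\theta_D$ is that of the adjacency matrix. A Delsarte clique is a clique with exactly $1+\frac{k}{-\theta_D}$ vertices. A non-complete distance-regular graph is geometric if there is a set $\mathcal C$ of Delsarte cliques such that every edge lies in exactly one member of $\mathcal C$. *)

theory Defs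
  imports Main "HOL-Library.Transitive_Closure_Table" Complex_Main
begin

definition simple_graph :: "'a set \<Rightarrow> ('a \<Rightarrow> 'a \<Rightarrow> bool) \<Rightarrow> bool" where
  "simple_graph V E \<longleftrightarrow> finite V \<and> V \<noteq> {} \<and>
     (\<forall>x y. E x y \<longrightarrow> x \<in> V \<and> y \<in> V) \<and>
     (\<forall>x y. E x y \<longrightarrow> E y x) \<and> (\<forall>x. \<not> E x x)"

definition edge_rel :: "'a set \<Rightarrow> ('a \<Rightarrow> 'a \<Rightarrow> bool) \<Rightarrow> ('a \<times> 'a) set" where
  "edge_rel V E = {(x, y). x \<in> V \<and> y \<in> V \<and> E x y}"

definition connected_graph :: "'a set \<Rightarrow> ('a \<Rightarrow> 'a \<Rightarrow> bool) \<Rightarrow> bool" where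
  "connected_graph V E \<longleftrightarrow> (\<forall>x\<in>V. \<forall>y\<in>V. \<exists>n. (x, y) \<in> edge_rel V E ^^ n)"

definition gdist :: "'a set \<Rightarrow> ('a \<Rightarrow> 'a \<Rightarrow> bool) \<Rightarrow> 'a \<Rightarrow> 'a \<Rightarrow> nat" where
  "gdist V E x y = (LEAST n. (x, y) \<in> edge_rel V E ^^ n)"

definition diameter :: "'a set \<Rightarrow> ('a \<Rightarrow> 'a \<Rightarrow> bool) \<Rightarrow> nat" where
  "diameter V E = Max {gdist V E x y | x y. x \<in> V \<and> y \<in> V}"

definition distance_regular ::
  "'a set \<Rightarrow> ('a \<Rightarrow> 'a \<Rightarrow> bool) \<Rightarrow> (nat \<Rightarrow> nat) \<Rightarrow> (nat \<Rightarrow> nat) \<Rightarrow> bool" where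
  "distance_regular V E b c \<longleftrightarrow> simple_graph V E \<and> connected_graph V E \<and>
     (\<forall>x\<in>V. \<forall>y\<in>V.
        card {z \<in> V. E y z \<and> gdist V E x z + 1 = gdist V E x y} = c (gdist V E x y) \<and>
        card {z \<in> V. E y z \<and> gdist V E x z = gdist V E x y + 1} = b (gdist V E x y))"

definition adj_eigenvalue :: "'a set \<Rightarrow> ('a \<Rightarrow> 'a \<Rightarrow> bool) \<Rightarrow> real \<Rightarrow> bool" where
  "adj_eigenvalue V E \<theta> \<longleftrightarrow> (\<exists>f :: 'a \<Rightarrow> real. (\<exists>x\<in>V. f x \<noteq> 0) \<and>
     (\<forall>x\<in>V. (\<Sum>y\<in>V. (if E x y then 1 else 0) * f y) = \<theta> * f x))"

definition smallest_eigenvalue :: "'a set \<Rightarrow> ('a \<Rightarrow> 'a \<Rightarrow> bool) \<Rightarrow> real \<Rightarrow> bool" where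
  "smallest_eigenvalue V E \<theta> \<longleftrightarrow> adj_eigenvalue V E \<theta> \<and> (\<forall>\<mu>. adj_eigenvalue V E \<mu> \<longrightarrow> \<theta> \<le> \<mu>)"

definition is_clique :: "'a set \<Rightarrow> ('a \<Rightarrow> 'a \<Rightarrow> bool) \<Rightarrow> 'a set \<Rightarrow> bool" where
  "is_clique V E C \<longleftrightarrow> C \<subseteq> V \<and> (\<forall>x\<in>C. \<forall>y\<in>C. x \<noteq> y \<longrightarrow> E x y)"

definition delsarte_clique ::
  "'a set \<Rightarrow> ('a \<Rightarrow> 'a \<Rightarrow> bool) \<Rightarrow> nat \<Rightarrow> real \<Rightarrow> 'a set \<Rightarrow> bool" where
  "delsarte_clique V E k \<theta> C \<longleftrightarrow> is_clique V E C \<and> real (card C) = 1 + real k / (- \<theta>)"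

definition complete_graph :: "'a set \<Rightarrow> ('a \<Rightarrow> 'a \<Rightarrow> bool) \<Rightarrow> bool" where
  "complete_graph V E \<longleftrightarrow> (\<forall>x\<in>V. \<forall>y\<in>V. x \<noteq> y \<longrightarrow> E x y)"

definition geometric ::
  "'a set \<Rightarrow> ('a \<Rightarrow> 'a \<Rightarrow> bool) \<Rightarrow> nat \<Rightarrow> real \<Rightarrow> bool" where
  "geometric V E k \<theta> \<longleftrightarrow> \<not> complete_graph V E \<and>
     (\<exists>\<C>. (\<forall>C\<in>\<C>. delsarte_clique V E k \<theta> C) \<and>
          (\<forall>x y. E x y \<longrightarrow> (\<exists>!C. C \<in> \<C> \<and> x \<in> C \<and> y \<in> C)))"

end

(*
  The lines of a geometric distance-regular graph are its Delsarte cliques: every vertex lies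
  on m of them and each has s = 1 + k/m vertices.  For a vertex v off a line C let psi C v be
  the number of neighbours of v on C.

  Because every vertex lies on m lines and -m is an eigenvalue, every (-m)-eigenvector sums to
  zero along each line.  Applied to the eigenvector t \<mapsto> u (d v t) given by the cosine sequence
  u of -m, this yields psi C v * u 1 + (s - psi C v) * u 2 = 0 whenever psi C v \<noteq> 0, so the
  nonzero values of psi are all equal.

  If they are at least 2, the number of lines through z containing a vertex closer to a fixed x
  grows strictly along a geodesic from x, whence D \<le> m.  Otherwise no vertex has two neighbours
  on a line not containing it; counting common neighbours (here c 2 \<ge> 2 is used) along the line
  through an edge from distance i to distance i + 1 gives c i + b (i + 1) + s \<le> c (i + 1) + b i,
  and telescoping gives D s \<le> 2 k < 2 m s, i.e. D < 2 m.  Both bounds are below m\<^sup>2.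
*)

theory Submission
  imports Defs
begin

lemma card_le_card_by_double_counting:
  assumes "finite W" "finite P" "0 < r"
    and "\<And>w. w \<in> W \<Longrightarrow> r \<le> card {t \<in> P. R w t}"
    and "\<And>t. t \<in> P \<Longrightarrow> card {w \<in> W. R w t} \<le> r"
  shows "card W \<le> card P"
proof -
  have "card W * r \<le> (\<Sum>w\<in>W. card {t \<in> P. R w t})"
    using sum_mono[of W "\<lambda>_. r"] assms(4) by simp
  also have "\<dots> = (\<Sum>t\<in>P. card {w \<in> W. R w t})"
    using sum.swap_restrict[OF assms(1,2), of "\<lambda>_ _. 1::nat" R] by simp
  also have "\<dots> \<le> card P * r"
    using sum_mono[of P _ "\<lambda>_. r"] assms(5) by simp
  finally show ?thesis using assms(3) by simp
qed

section \<open>Distances in connected graphs\<close>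

locale connected_simple_graph =
  fixes V :: "'a set" and E :: "'a \<Rightarrow> 'a \<Rightarrow> bool"
  assumes simple: "simple_graph V E" and connected: "connected_graph V E"
begin

abbreviation "d \<equiv> gdist V E"
abbreviation "diam \<equiv> diameter V E"

definition nbhd :: "'a \<Rightarrow> 'a set" where
  "nbhd y = {w \<in> V. E y w}"

definition sphere :: "'a \<Rightarrow> nat \<Rightarrow> 'a set" where
  "sphere x i = {t \<in> V. d x t = i}"

lemma finite_V: "finite V" and V_nonempty: "V \<noteq> {}"
  and edge_in_V: "E x y \<Longrightarrow> x \<in> V \<and> y \<in> V"
  and edge_sym: "E x y \<Longrightarrow> E y x" and edge_irrefl: "\<not> E x x"
  using simple unfolding simple_graph_def by blast+

lemma finite_nbhd: "finite (nbhd y)" and finite_sphere: "finite (sphere x i)"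
  unfolding nbhd_def sphere_def using finite_V by simp_all

lemma nbhd_subset_V: "nbhd y \<subseteq> V" and sphere_subset_V: "sphere x i \<subseteq> V"
  unfolding nbhd_def sphere_def by auto

lemma mem_nbhd_iff: "w \<in> nbhd y \<longleftrightarrow> E y w"
  unfolding nbhd_def using edge_in_V by auto

lemma edge_rel_iff: "(x, y) \<in> edge_rel V E \<longleftrightarrow> E x y"
  using edge_in_V unfolding edge_rel_def by auto

lemma walk_of_dist: "x \<in> V \<Longrightarrow> y \<in> V \<Longrightarrow> (x, y) \<in> edge_rel V E ^^ d x y"
  using connected unfolding connected_graph_def gdist_def by (meson LeastI_ex)

lemma dist_le_walk: "(x, y) \<in> edge_rel V E ^^ n \<Longrightarrow> d x y \<le> n"
  unfolding gdist_def by (rule Least_le)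

lemma dist_self [simp]: "d x x = 0"
  using dist_le_walk[of x x 0] by simp

lemma dist_eq_0_iff: "x \<in> V \<Longrightarrow> y \<in> V \<Longrightarrow> d x y = 0 \<longleftrightarrow> x = y"
  using walk_of_dist[of x y] by auto

lemma dist_eq_1_iff:
  assumes "x \<in> V" "y \<in> V"
  shows "d x y = 1 \<longleftrightarrow> E x y"
proof
  assume "d x y = 1"
  then show "E x y" using walk_of_dist[OF assms] edge_rel_iff by simp
next
  assume "E x y"
  then have "d x y \<le> 1" "x \<noteq> y"
    using dist_le_walk[of x y 1] edge_rel_iff edge_irrefl by auto
  then show "d x y = 1" using dist_eq_0_iff[OF assms] by linarith
qed

lemma dist_triangle: "x \<in> V \<Longrightarrow> y \<in> V \<Longrightarrow> z \<in> V \<Longrightarrow> d x z \<le> d x y + d y z"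
  by (meson walk_of_dist relpow_trans dist_le_walk)

lemma dist_edge_le:
  assumes "x \<in> V" "E y z"
  shows "d x z \<le> d x y + 1"
proof -
  have "y \<in> V" "z \<in> V" "d y z = 1" using assms edge_in_V dist_eq_1_iff by auto
  then show ?thesis using dist_triangle[OF assms(1)] by metis
qed

lemma dist_edge_cases:
  assumes "x \<in> V" "E y w"
  shows "d x w + 1 = d x y \<or> d x w = d x y \<or> d x w = d x y + 1"
  using dist_edge_le[OF assms] dist_edge_le[OF assms(1) edge_sym[OF assms(2)]] by linarith

lemma dist_eq_2I:
  assumes "x \<in> V" "y \<in> V" "E x z" "E z y" "x \<noteq> y" "\<not> E x y"
  shows "d x y = 2"
proof -
  have "d x z = 1" "z \<in> V" using assms dist_eq_1_iff edge_in_V by auto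
  then have "d x y \<le> 2" using dist_edge_le[OF assms(1,4)] by simp
  moreover have "d x y \<noteq> 0" "d x y \<noteq> 1"
    using assms dist_eq_0_iff dist_eq_1_iff by simp_all
  ultimately show ?thesis by linarith
qed

lemma dist_SucE:
  assumes "x \<in> V" "z \<in> V" "d x z = Suc n"
  obtains y where "y \<in> V" "d x y = n" "E y z"
proof -
  have "(x, z) \<in> edge_rel V E ^^ Suc n" using walk_of_dist[OF assms(1,2)] assms(3) by simp
  then obtain y where xy: "(x, y) \<in> edge_rel V E ^^ n" and "(y, z) \<in> edge_rel V E"
    by (rule relpow_Suc_E)
  then have "E y z" using edge_rel_iff by simp
  moreover have "d x y = n"
    using dist_le_walk[OF xy] dist_edge_le[OF assms(1) \<open>E y z\<close>] assms(3) by simp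
  ultimately show thesis using that edge_in_V by simp
qed

lemma exists_at_dist:
  assumes "x \<in> V" "z \<in> V" "j \<le> d x z"
  shows "\<exists>y\<in>V. d x y = j"
  using assms
proof (induction "d x z" arbitrary: z)
  case (Suc n)
  show ?case
  proof (cases "j = Suc n")
    case True
    then show ?thesis using Suc.prems(2) Suc.hyps(2) by metis
  next
    case False
    obtain y where "y \<in> V" "d x y = n" using dist_SucE[OF Suc.prems(1,2) Suc.hyps(2)[symmetric]] .
    moreover have "j \<le> n" using False Suc.prems(3) Suc.hyps(2) by simp
    ultimately show ?thesis using Suc.hyps(1) Suc.prems(1) by blast
  qed
qed auto

lemma finite_dist_values: "finite {d x y | x y. x \<in> V \<and> y \<in> V}"
proof -
  have "{d x y | x y. x \<in> V \<and> y \<in> V} = (\<lambda>(x, y). d x y) ` (V \<times> V)" by auto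
  then show ?thesis using finite_V by simp
qed

lemma dist_le_diam: "x \<in> V \<Longrightarrow> y \<in> V \<Longrightarrow> d x y \<le> diam"
  unfolding diameter_def using finite_dist_values by (intro Max_ge) auto

lemma diam_attained: obtains x y where "x \<in> V" "y \<in> V" "d x y = diam"
proof -
  have "{d x y | x y. x \<in> V \<and> y \<in> V} \<noteq> {}" using V_nonempty by auto
  then have "diam \<in> {d x y | x y. x \<in> V \<and> y \<in> V}"
    unfolding diameter_def using finite_dist_values Max_in by blast
  then obtain x y where "x \<in> V" "y \<in> V" "diam = d x y" by blast
  then show thesis using that by simp
qed

lemma edge_between_spheres:
  assumes "i < diam"
  obtains x y z where "x \<in> V" "y \<in> V" "z \<in> V" "d x y = i" "d x z = Suc i" "E y z"
proof -
  obtain x z where x: "x \<in> V" and "z \<in> V" "d x z = diam" by (rule diam_attained)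
  then obtain z' where z': "z' \<in> V" "d x z' = Suc i"
    using exists_at_dist[of x z "Suc i"] assms by auto
  then obtain y where "y \<in> V" "d x y = i" "E y z'" using dist_SucE[OF x] by blast
  then show thesis using that x z' by blast
qed

lemma sphere_0: "x \<in> V \<Longrightarrow> sphere x 0 = {x}"
  unfolding sphere_def using dist_eq_0_iff by auto

lemma sphere_1: "x \<in> V \<Longrightarrow> sphere x 1 = nbhd x"
  unfolding sphere_def nbhd_def using dist_eq_1_iff by auto

lemma sphere_beyond_diam: "x \<in> V \<Longrightarrow> diam < i \<Longrightarrow> sphere x i = {}"
  unfolding sphere_def using dist_le_diam by fastforce

lemma adj_eigenvalueE:
  assumes "adj_eigenvalue V E \<theta>"
  obtains f x0 where "x0 \<in> V" "f x0 \<noteq> 0" "\<And>x. x \<in> V \<Longrightarrow> (\<Sum>y\<in>nbhd x. f y) = \<theta> * f x"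
proof -
  obtain f x0 where "x0 \<in> V" "f x0 \<noteq> 0"
    and eig: "\<forall>x\<in>V. (\<Sum>y\<in>V. (if E x y then 1 else 0) * f y) = \<theta> * f x"
    using assms unfolding adj_eigenvalue_def by blast
  moreover have "(\<Sum>y\<in>nbhd x. f y) = (\<Sum>y\<in>V. (if E x y then 1 else 0) * f y)" for x
  proof -
    have "(\<Sum>y\<in>V. (if E x y then 1 else 0) * f y) = (\<Sum>y\<in>V. if E x y then f y else 0)"
      by (rule sum.cong) auto
    then show ?thesis unfolding nbhd_def using finite_V by (simp add: sum.inter_filter)
  qed
  ultimately show thesis using that by metis
qed

definition sphere_sum :: "('a \<Rightarrow> real) \<Rightarrow> 'a \<Rightarrow> nat \<Rightarrow> real" where
  "sphere_sum f x i = (\<Sum>z\<in>sphere x i. f z)"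

lemma sphere_sum_eq_sum_V: "sphere_sum f x i = (\<Sum>z\<in>V. if d x z = i then f z else 0)"
  unfolding sphere_sum_def sphere_def using finite_V by (simp add: sum.inter_filter)

lemma sum_nbhd_sums_over_sphere:
  fixes f :: "'a \<Rightarrow> real"
  shows "(\<Sum>w\<in>sphere x i. \<Sum>z\<in>nbhd w. f z) = (\<Sum>z\<in>V. card (nbhd z \<inter> sphere x i) * f z)"
proof -
  have "(\<Sum>w\<in>sphere x i. \<Sum>z\<in>nbhd w. f z) = (\<Sum>z\<in>V. \<Sum>w\<in>{w \<in> sphere x i. E w z}. f z)"
    using sum.swap_restrict[OF finite_sphere finite_V, of "\<lambda>_ z. f z" E]
    unfolding nbhd_def by simp
  also have "\<dots> = (\<Sum>z\<in>V. card (nbhd z \<inter> sphere x i) * f z)"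
  proof (rule sum.cong)
    fix z assume "z \<in> V"
    then have "{w \<in> sphere x i. E w z} = nbhd z \<inter> sphere x i"
      using edge_sym sphere_subset_V by (auto simp: mem_nbhd_iff)
    then show "(\<Sum>w\<in>{w \<in> sphere x i. E w z}. f z) = card (nbhd z \<inter> sphere x i) * f z" by simp
  qed simp
  finally show ?thesis .
qed

end

section \<open>Distance-regular graphs\<close>

locale distance_regular_graph = connected_simple_graph +
  fixes b c :: "nat \<Rightarrow> nat"
  assumes card_pred_nbrs:
      "x \<in> V \<Longrightarrow> y \<in> V \<Longrightarrow> card {z \<in> V. E y z \<and> d x z + 1 = d x y} = c (d x y)"
    and card_succ_nbrs:
      "x \<in> V \<Longrightarrow> y \<in> V \<Longrightarrow> card {z \<in> V. E y z \<and> d x z = d x y + 1} = b (d x y)"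
begin

definition a :: "nat \<Rightarrow> nat" where
  "a i = b 0 - b i - c i"

lemma card_nbhd_inter_sphere_pred:
  "x \<in> V \<Longrightarrow> y \<in> V \<Longrightarrow> d x y = Suc i \<Longrightarrow> card (nbhd y \<inter> sphere x i) = c (Suc i)"
  using card_pred_nbrs[of x y] unfolding nbhd_def sphere_def
  by (simp add: Int_def conj_commute conj_left_commute)

lemma card_nbhd_inter_sphere_succ:
  "x \<in> V \<Longrightarrow> y \<in> V \<Longrightarrow> d x y = i \<Longrightarrow> card (nbhd y \<inter> sphere x (Suc i)) = b i"
  using card_succ_nbrs[of x y] unfolding nbhd_def sphere_def
  by (simp add: Int_def conj_commute conj_left_commute)

lemma card_nbhd: "y \<in> V \<Longrightarrow> card (nbhd y) = b 0"
  using card_nbhd_inter_sphere_succ[of y y 0] sphere_1[of y] by (simp add: One_nat_def)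

lemma c_0: "c 0 = 0"
proof -
  obtain x where "x \<in> V" using V_nonempty by auto
  then show ?thesis using card_pred_nbrs[of x x] by simp
qed

lemma card_nbhd_pred:
  "x \<in> V \<Longrightarrow> y \<in> V \<Longrightarrow> card {w \<in> nbhd y. d x w + 1 = d x y} = c (d x y)"
  using card_pred_nbrs[of x y] unfolding nbhd_def by (simp add: conj_commute conj_left_commute)

lemma card_nbhd_succ:
  "x \<in> V \<Longrightarrow> y \<in> V \<Longrightarrow> card {w \<in> nbhd y. d x w = d x y + 1} = b (d x y)"
  using card_succ_nbrs[of x y] unfolding nbhd_def by (simp add: conj_commute conj_left_commute)

lemma sum_nbhd_split_by_dist:
  assumes "x \<in> V"
  shows "(\<Sum>w\<in>nbhd y. g w) = (\<Sum>w | w \<in> nbhd y \<and> d x w + 1 = d x y. g w)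
     + (\<Sum>w | w \<in> nbhd y \<and> d x w = d x y. g w) + (\<Sum>w | w \<in> nbhd y \<and> d x w = d x y + 1. g w)"
proof -
  let ?A = "{w. w \<in> nbhd y \<and> d x w + 1 = d x y}"
  let ?B = "{w. w \<in> nbhd y \<and> d x w = d x y}"
  let ?C = "{w. w \<in> nbhd y \<and> d x w = d x y + 1}"
  have "nbhd y = ?A \<union> ?B \<union> ?C"
    using dist_edge_cases[OF assms] unfolding nbhd_def by auto
  then have "sum g (nbhd y) = sum g (?A \<union> ?B \<union> ?C)" by (rule arg_cong)
  also have "\<dots> = sum g (?A \<union> ?B) + sum g ?C"
    using finite_nbhd by (intro sum.union_disjoint) auto
  also have "sum g (?A \<union> ?B) = sum g ?A + sum g ?B"
    using finite_nbhd by (intro sum.union_disjoint) auto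
  finally show ?thesis .
qed

lemma sum_nbhd_dist_card:
  fixes h :: "nat \<Rightarrow> real"
  assumes x: "x \<in> V" and y: "y \<in> V"
  defines "j \<equiv> d x y"
  shows "(\<Sum>w\<in>nbhd y. h (d x w)) = c j * h (j - 1) + card {w \<in> nbhd y. d x w = j} * h j + b j * h (j + 1)"
proof -
  let ?A = "{w. w \<in> nbhd y \<and> d x w + 1 = j}"
  let ?B = "{w. w \<in> nbhd y \<and> d x w = j}"
  let ?C = "{w. w \<in> nbhd y \<and> d x w = j + 1}"
  have "card ?A = c j" "card ?C = b j"
    using card_nbhd_pred[OF x y] card_nbhd_succ[OF x y] unfolding j_def by simp_all
  moreover have "(\<Sum>w\<in>?A. h (d x w)) = (\<Sum>w\<in>?A. h (j - 1))"
    "(\<Sum>w\<in>?B. h (d x w)) = (\<Sum>w\<in>?B. h j)" "(\<Sum>w\<in>?C. h (d x w)) = (\<Sum>w\<in>?C. h (j + 1))"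
    by (rule sum.cong, simp, force)+
  ultimately show ?thesis
    using sum_nbhd_split_by_dist[OF x, of "\<lambda>w. h (d x w)" y] unfolding j_def by simp
qed

lemma card_nbhd_same_sphere:
  assumes "x \<in> V" "y \<in> V"
  shows "card {w \<in> nbhd y. d x w = d x y} + b (d x y) + c (d x y) = b 0"
  using sum_nbhd_dist_card[OF assms, of "\<lambda>_. 1"] card_nbhd[OF assms(2)] by simp

lemma a_b_c_sum: "i \<le> diam \<Longrightarrow> a i + b i + c i = b 0"
proof -
  assume "i \<le> diam"
  obtain x z where "x \<in> V" "z \<in> V" "d x z = diam" by (rule diam_attained)
  then obtain y where "y \<in> V" "d x y = i" using exists_at_dist \<open>i \<le> diam\<close> by metis
  then show ?thesis using card_nbhd_same_sphere[OF \<open>x \<in> V\<close> \<open>y \<in> V\<close>] unfolding a_def by simp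
qed

lemma card_nbhd_same_sphere_eq_a:
  "x \<in> V \<Longrightarrow> y \<in> V \<Longrightarrow> card {w \<in> nbhd y. d x w = d x y} = a (d x y)"
  using card_nbhd_same_sphere[of x y] unfolding a_def by (simp add: diff_diff_left)

lemma sum_nbhd_dist:
  fixes h :: "nat \<Rightarrow> real"
  assumes "x \<in> V" "y \<in> V"
  defines "j \<equiv> d x y"
  shows "(\<Sum>w\<in>nbhd y. h (d x w)) = c j * h (j - 1) + a j * h j + b j * h (j + 1)"
  using sum_nbhd_dist_card[OF assms(1,2)] card_nbhd_same_sphere_eq_a[OF assms(1,2)]
  unfolding j_def by simp

lemma b_pos: "i < diam \<Longrightarrow> 0 < b i"
proof -
  assume "i < diam"
  then obtain x y z where "x \<in> V" "y \<in> V" "d x y = i" "d x z = Suc i" "E y z"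
    by (rule edge_between_spheres)
  then have "z \<in> nbhd y \<inter> sphere x (Suc i)"
    using edge_in_V by (auto simp: mem_nbhd_iff sphere_def)
  then have "0 < card (nbhd y \<inter> sphere x (Suc i))"
    using finite_nbhd card_gt_0_iff by blast
  then show ?thesis using card_nbhd_inter_sphere_succ \<open>x \<in> V\<close> \<open>y \<in> V\<close> \<open>d x y = i\<close> by simp
qed

lemma b_diam: "b diam = 0"
proof -
  obtain x y where "x \<in> V" "y \<in> V" "d x y = diam" by (rule diam_attained)
  moreover have "sphere x (Suc diam) = {}"
    using sphere_beyond_diam \<open>x \<in> V\<close> by simp
  ultimately show ?thesis using card_nbhd_inter_sphere_succ[of x y diam] by simp
qed

lemma c_1: "0 < diam \<Longrightarrow> c 1 = 1"
proof -
  assume "0 < diam"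
  then obtain x y z where "x \<in> V" "y \<in> V" "z \<in> V" "d x y = 0" "d x z = Suc 0" "E y z"
    by (rule edge_between_spheres)
  moreover from this have "nbhd z \<inter> sphere x 0 = {x}"
    using sphere_0 dist_eq_0_iff edge_sym by (auto simp: mem_nbhd_iff)
  ultimately show ?thesis using card_nbhd_inter_sphere_pred[of x z 0] by simp
qed

lemma card_common_nbrs: "w \<in> V \<Longrightarrow> z \<in> V \<Longrightarrow> d w z = 2 \<Longrightarrow> card (nbhd z \<inter> nbhd w) = c 2"
  using card_nbhd_inter_sphere_pred[of w z 1] sphere_1[of w] by (simp add: numeral_2_eq_2)

lemma card_common_nbrs_minus_one:
  assumes "y \<in> V" "w \<in> V" "d y w = 2" "E y z" "E z w"
  shows "card (nbhd y \<inter> nbhd w - {z}) = c 2 - 1"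
proof -
  have "z \<in> nbhd y \<inter> nbhd w" using assms edge_sym by (simp add: mem_nbhd_iff)
  then show ?thesis using card_common_nbrs[OF assms(1-3)] finite_nbhd by (simp add: inf_commute)
qed

subsection \<open>The cosine sequence of an eigenvalue\<close>

lemma card_nbhd_inter_sphere_Suc:
  assumes x: "x \<in> V" and z: "z \<in> V"
  shows "card (nbhd z \<inter> sphere x (Suc i)) =
    (if d x z = Suc (Suc i) then c (Suc (Suc i)) else if d x z = Suc i then a (Suc i)
     else if d x z = i then b i else 0)"
proof -
  have "nbhd z \<inter> sphere x (d x z) = {w \<in> nbhd z. d x w = d x z}"
    using nbhd_subset_V unfolding sphere_def by auto
  then have same: "card (nbhd z \<inter> sphere x (d x z)) = a (d x z)"
    using card_nbhd_same_sphere_eq_a[OF x z] by simp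
  have empty: "nbhd z \<inter> sphere x (Suc i) = {}" if "d x z \<notin> {i, Suc i, Suc (Suc i)}"
  proof -
    have "d x w \<noteq> Suc i" if "w \<in> nbhd z" for w
      using dist_edge_cases[OF x, of z w] that \<open>d x z \<notin> {i, Suc i, Suc (Suc i)}\<close>
      by (auto simp: mem_nbhd_iff)
    then show ?thesis unfolding sphere_def by blast
  qed
  consider "d x z = Suc (Suc i)" | "d x z = Suc i" | "d x z = i" | "d x z \<notin> {i, Suc i, Suc (Suc i)}"
    by auto
  then show ?thesis
  proof cases
    case 1
    then show ?thesis using card_nbhd_inter_sphere_pred[OF x z 1] by simp
  next
    case 2
    then show ?thesis using same by simp
  next
    case 3
    then show ?thesis using card_nbhd_inter_sphere_succ[OF x z 3] by simp
  qed (use empty in auto)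
qed

lemma sphere_sum_recurrence:
  assumes eig: "\<And>x. x \<in> V \<Longrightarrow> (\<Sum>y\<in>nbhd x. f y) = \<theta> * f x" and x: "x \<in> V"
  shows "\<theta> * sphere_sum f x (Suc i) = c (Suc (Suc i)) * sphere_sum f x (Suc (Suc i))
    + a (Suc i) * sphere_sum f x (Suc i) + b i * sphere_sum f x i"
proof -
  have "\<theta> * sphere_sum f x (Suc i) = (\<Sum>w\<in>sphere x (Suc i). \<theta> * f w)"
    unfolding sphere_sum_def by (simp add: sum_distrib_left)
  also have "\<dots> = (\<Sum>w\<in>sphere x (Suc i). \<Sum>z\<in>nbhd w. f z)"
    using eig sphere_subset_V[of x "Suc i"] by (intro sum.cong) auto
  also have "\<dots> = (\<Sum>z\<in>V. card (nbhd z \<inter> sphere x (Suc i)) * f z)"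
    by (rule sum_nbhd_sums_over_sphere)
  also have "\<dots> = (\<Sum>z\<in>V. c (Suc (Suc i)) * (if d x z = Suc (Suc i) then f z else 0)
      + a (Suc i) * (if d x z = Suc i then f z else 0) + b i * (if d x z = i then f z else 0))"
    by (rule sum.cong) (auto simp: card_nbhd_inter_sphere_Suc[OF x])
  also have "\<dots> = c (Suc (Suc i)) * sphere_sum f x (Suc (Suc i))
      + a (Suc i) * sphere_sum f x (Suc i) + b i * sphere_sum f x i"
    unfolding sphere_sum_eq_sum_V by (simp add: sum.distrib sum_distrib_left)
  finally show ?thesis .
qed

text \<open>Only the values up to diam matter: b diam = 0, so the next quotient
  is a division by zero.\<close>

fun cosine :: "real \<Rightarrow> nat \<Rightarrow> real" where
  "cosine \<theta> 0 = 1"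
| "cosine \<theta> (Suc 0) = \<theta> / real (b 0)"
| "cosine \<theta> (Suc (Suc i)) =
     ((\<theta> - real (a (Suc i))) * cosine \<theta> (Suc i) - real (c (Suc i)) * cosine \<theta> i) / real (b (Suc i))"

lemma cosine_recurrence:
  "Suc i < diam \<Longrightarrow>
    b (Suc i) * cosine \<theta> (Suc (Suc i)) = (\<theta> - real (a (Suc i))) * cosine \<theta> (Suc i) - c (Suc i) * cosine \<theta> i"
  using b_pos[of "Suc i"] by simp

definition c_prod :: "nat \<Rightarrow> real" where
  "c_prod i = (\<Prod>j\<in>{1..i}. real (c j))"

definition b_prod :: "nat \<Rightarrow> real" where
  "b_prod i = (\<Prod>j<i. real (b j))"

lemma c_prod_Suc: "c_prod (Suc i) = c_prod i * c (Suc i)"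
  unfolding c_prod_def by (simp add: prod.cl_ivl_Suc)

lemma b_prod_Suc: "b_prod (Suc i) = b_prod i * b i"
  unfolding b_prod_def by simp

lemma b_prod_nonzero: "i \<le> diam \<Longrightarrow> b_prod i \<noteq> 0"
  unfolding b_prod_def using b_pos by simp

lemma sphere_sum_eq_cosine:
  assumes eig: "\<And>x. x \<in> V \<Longrightarrow> (\<Sum>y\<in>nbhd x. f y) = \<theta> * f x"
  shows "i \<le> diam \<Longrightarrow> x \<in> V \<Longrightarrow> sphere_sum f x i * c_prod i = cosine \<theta> i * b_prod i * f x"
proof (induction i arbitrary: x rule: induct_nat_012)
  case 0
  then show ?case using sphere_0 unfolding sphere_sum_def c_prod_def b_prod_def by simp
next
  case 1
  then have "c 1 = 1" "b 0 \<noteq> 0" using c_1 b_pos by auto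
  then show ?case
    using 1 sphere_1 eig unfolding sphere_sum_def c_prod_def b_prod_def by simp
next
  case (ge2 n)
  let ?G = "sphere_sum f x"
  have IH: "?G n * c_prod n = cosine \<theta> n * b_prod n * f x"
    "?G (Suc n) * c_prod (Suc n) = cosine \<theta> (Suc n) * b_prod (Suc n) * f x"
    using ge2 by simp_all
  have "?G (Suc (Suc n)) * c_prod (Suc (Suc n)) = c_prod (Suc n) * (c (Suc (Suc n)) * ?G (Suc (Suc n)))"
    by (simp add: c_prod_Suc)
  also have "\<dots> = c_prod (Suc n) * (\<theta> * ?G (Suc n) - a (Suc n) * ?G (Suc n) - b n * ?G n)"
    using sphere_sum_recurrence[OF eig ge2.prems(2), of n] by simp
  also have "\<dots> = (\<theta> - real (a (Suc n))) * (?G (Suc n) * c_prod (Suc n)) - b n * c (Suc n) * (?G n * c_prod n)"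
    by (simp add: c_prod_Suc algebra_simps)
  also have "\<dots> = ((\<theta> - real (a (Suc n))) * cosine \<theta> (Suc n) - c (Suc n) * cosine \<theta> n) * b_prod (Suc n) * f x"
    unfolding IH by (simp add: b_prod_Suc algebra_simps)
  also have "\<dots> = cosine \<theta> (Suc (Suc n)) * b_prod (Suc (Suc n)) * f x"
  proof -
    have "Suc n < diam" using ge2.prems(1) by simp
    note rec = cosine_recurrence[OF this, of \<theta>, symmetric]
    show ?thesis unfolding rec b_prod_Suc by (simp only: mult_ac)
  qed
  finally show ?case .
qed

text \<open>The recurrence determines the cosine sequence only up to diam; the equation at
  diam is where the eigenvalue enters, read off from the sphere sums around a vertex at
  which an eigenvector does not vanish.\<close>

lemma cosine_at_diam:
  assumes eig: "\<And>x. x \<in> V \<Longrightarrow> (\<Sum>y\<in>nbhd x. f y) = \<theta> * f x"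
    and x0: "x0 \<in> V" "f x0 \<noteq> 0" and "0 < diam"
  shows "(\<theta> - real (a diam)) * cosine \<theta> diam = c diam * cosine \<theta> (diam - 1)"
proof -
  obtain e where e: "diam = Suc e" using \<open>0 < diam\<close> gr0_conv_Suc by auto
  let ?G = "sphere_sum f x0"
  have G: "?G e * c_prod e = cosine \<theta> e * b_prod e * f x0"
    "?G (Suc e) * c_prod (Suc e) = cosine \<theta> (Suc e) * b_prod (Suc e) * f x0"
    using sphere_sum_eq_cosine[OF eig _ x0(1)] e by simp_all
  have "?G (Suc (Suc e)) = 0"
    using sphere_beyond_diam[OF x0(1)] e unfolding sphere_sum_def by simp
  then have rec: "(\<theta> - real (a (Suc e))) * ?G (Suc e) = b e * ?G e"
    using sphere_sum_recurrence[OF eig x0(1), of e] by (simp add: algebra_simps)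
  have "((\<theta> - real (a (Suc e))) * cosine \<theta> (Suc e)) * (b_prod (Suc e) * f x0)
      = (\<theta> - real (a (Suc e))) * (?G (Suc e) * c_prod (Suc e))"
    using G by simp
  also have "\<dots> = c (Suc e) * (b e * (?G e * c_prod e))"
    using rec by (simp add: c_prod_Suc algebra_simps)
  also have "\<dots> = (c (Suc e) * cosine \<theta> e) * (b_prod (Suc e) * f x0)"
    using G by (simp add: b_prod_Suc algebra_simps)
  finally show ?thesis
    using b_prod_nonzero[of "Suc e"] e x0(2) by simp
qed

lemma cosine_sum_nbhd:
  assumes "adj_eigenvalue V E \<theta>" "0 < diam" and v: "v \<in> V" and z: "z \<in> V"
  shows "(\<Sum>w\<in>nbhd z. cosine \<theta> (d v w)) = \<theta> * cosine \<theta> (d v z)"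
proof -
  let ?j = "d v z"
  have sum: "(\<Sum>w\<in>nbhd z. cosine \<theta> (d v w))
      = c ?j * cosine \<theta> (?j - 1) + a ?j * cosine \<theta> ?j + b ?j * cosine \<theta> (?j + 1)"
    by (rule sum_nbhd_dist[OF v z])
  consider "?j = 0" | "?j = diam" "0 < ?j" | i where "?j = Suc i" "Suc i < diam"
    using dist_le_diam[OF v z] by (metis le_neq_implies_less not0_implies_Suc neq0_conv)
  then show ?thesis
  proof cases
    case 1
    then show ?thesis using sum c_0 b_pos[OF \<open>0 < diam\<close>] unfolding a_def by simp
  next
    case 2
    obtain f x0 where "x0 \<in> V" "f x0 \<noteq> 0" "\<And>x. x \<in> V \<Longrightarrow> (\<Sum>y\<in>nbhd x. f y) = \<theta> * f x"
      using adj_eigenvalueE[OF assms(1)] by blast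
    then show ?thesis
      using sum 2 cosine_at_diam[of f \<theta> x0] b_diam \<open>0 < diam\<close> by (simp add: algebra_simps)
  next
    case 3
    then show ?thesis using sum cosine_recurrence[of i \<theta>] by (simp add: algebra_simps)
  qed
qed

end

section \<open>Geometric distance-regular graphs\<close>

locale geometric_drg = distance_regular_graph +
  fixes m :: nat and \<C> :: "'a set set" and s :: nat
  assumes m_pos: "0 < m"
    and line_clique: "C \<in> \<C> \<Longrightarrow> is_clique V E C"
    and card_line: "C \<in> \<C> \<Longrightarrow> card C = s"
    and line_size: "real s = 1 + real (b 0) / real m"
    and edge_in_unique_line: "E x y \<Longrightarrow> \<exists>!C. C \<in> \<C> \<and> x \<in> C \<and> y \<in> C"
    and diam_ge_2: "2 \<le> diam"
begin

lemma line_subset_V: "C \<in> \<C> \<Longrightarrow> C \<subseteq> V"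
  using line_clique unfolding is_clique_def by blast

lemma line_edge: "C \<in> \<C> \<Longrightarrow> x \<in> C \<Longrightarrow> y \<in> C \<Longrightarrow> x \<noteq> y \<Longrightarrow> E x y"
  using line_clique unfolding is_clique_def by blast

lemma finite_line: "C \<in> \<C> \<Longrightarrow> finite C"
  using line_subset_V finite_V finite_subset by blast

lemma finite_lines: "finite \<C>"
  using line_subset_V finite_V by (metis Pow_iff finite_Pow_iff finite_subset subsetI)

lemma line_eqI:
  assumes "C \<in> \<C>" "C' \<in> \<C>" "p \<in> C" "q \<in> C" "p \<in> C'" "q \<in> C'" "p \<noteq> q"
  shows "C = C'"
  using edge_in_unique_line[OF line_edge[OF assms(1,3,4,7)]] assms by blast

lemma line_through_edge:
  assumes "E x y"
  obtains C where "C \<in> \<C>" "x \<in> C" "y \<in> C"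
  using edge_in_unique_line[OF assms] by blast

lemma dist_on_line: "x \<in> V \<Longrightarrow> L \<in> \<C> \<Longrightarrow> y \<in> L \<Longrightarrow> t \<in> L \<Longrightarrow> d x t \<le> d x y + 1"
  using line_edge dist_edge_le by (cases "t = y") auto

lemma valency_pos: "0 < b 0"
  using b_pos diam_ge_2 by simp

lemma valency_eq: "b 0 = m * (s - 1)" and line_size_ge_2: "2 \<le> s"
proof -
  have "real (s * m) = real (m + b 0)"
    using line_size m_pos by (simp add: field_simps)
  then have sm: "s * m = m + b 0" by (simp only: of_nat_eq_iff)
  then show "b 0 = m * (s - 1)" by (simp add: diff_mult_distrib2 mult.commute)
  have "1 * m < s * m" using sm valency_pos by simp
  then show "2 \<le> s" by (simp only: mult_less_cancel2) simp
qed

definition lines_at :: "'a \<Rightarrow> 'a set set" where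
  "lines_at z = {C \<in> \<C>. z \<in> C}"

lemma nbhd_eq_UN_lines_at: "nbhd z = (\<Union>C\<in>lines_at z. C - {z})"
proof (intro equalityI subsetI)
  fix w assume "w \<in> nbhd z"
  then obtain C where "C \<in> \<C>" "z \<in> C" "w \<in> C" "w \<noteq> z"
    using line_through_edge edge_irrefl unfolding mem_nbhd_iff by metis
  then show "w \<in> (\<Union>C\<in>lines_at z. C - {z})" unfolding lines_at_def by auto
next
  fix w assume "w \<in> (\<Union>C\<in>lines_at z. C - {z})"
  then show "w \<in> nbhd z" unfolding lines_at_def mem_nbhd_iff using line_edge by auto
qed

lemma lines_at_disjoint:
  "\<forall>C\<in>lines_at z. \<forall>C'\<in>lines_at z. C \<noteq> C' \<longrightarrow> (C - {z}) \<inter> (C' - {z}) = {}"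
  unfolding lines_at_def using line_eqI by blast

lemma finite_lines_at: "finite (lines_at z)"
  unfolding lines_at_def using finite_lines by simp

lemma card_lines_at: "z \<in> V \<Longrightarrow> card (lines_at z) = m"
proof -
  assume "z \<in> V"
  have "b 0 = card (\<Union>C\<in>lines_at z. C - {z})"
    using card_nbhd[OF \<open>z \<in> V\<close>] nbhd_eq_UN_lines_at by simp
  also have "\<dots> = (\<Sum>C\<in>lines_at z. card (C - {z}))"
    using finite_lines_at lines_at_disjoint finite_line
    by (intro card_UN_disjoint) (auto simp: lines_at_def)
  also have "\<dots> = card (lines_at z) * (s - 1)"
    using card_line finite_line by (simp add: lines_at_def)
  finally show ?thesis using valency_eq line_size_ge_2 by simp
qed

subsection \<open>Lines meeting every neighbourhood in at most one vertex\<close>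

definition psi :: "'a set \<Rightarrow> 'a \<Rightarrow> nat" where
  "psi C v = card (C \<inter> nbhd v)"

lemma nbrs_on_line_eq_if_psi_le_1:
  assumes "psi C v \<le> 1" "p \<in> C" "q \<in> C" "E v p" "E v q"
  shows "p = q"
  using assms card_le_Suc0_iff_eq[of "C \<inter> nbhd v"] finite_nbhd
  unfolding psi_def by (simp add: mem_nbhd_iff)

lemma card_nbhd_inter_split_line:
  assumes "L \<in> \<C>" "y \<in> L" "y \<notin> S"
  shows "card (nbhd y \<inter> S) = card (L \<inter> S) + card (nbhd y \<inter> S - L)"
proof -
  have "L \<inter> S \<subseteq> nbhd y"
  proof
    fix t assume "t \<in> L \<inter> S"
    then have "t \<in> L" "t \<noteq> y" using assms(3) by auto
    then show "t \<in> nbhd y" using line_edge[OF assms(1,2)] by (simp add: mem_nbhd_iff)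
  qed
  then have "card (nbhd y \<inter> S) = card ((L \<inter> S) \<union> (nbhd y \<inter> S - L))"
    by (intro arg_cong[where f = card]) blast
  also have "\<dots> = card (L \<inter> S) + card (nbhd y \<inter> S - L)"
    using finite_line[OF assms(1)] finite_nbhd by (intro card_Un_disjoint) auto
  finally show ?thesis .
qed

lemma dist_eq_2_if_psi_le_1:
  assumes "psi L t \<le> 1" and L: "L \<in> \<C>" "y \<in> L" "z \<in> L" "y \<noteq> z"
    and t: "t \<in> V" "t \<notin> L" "E y t"
  shows "d z t = 2"
proof -
  have "\<not> E t z"
    using nbrs_on_line_eq_if_psi_le_1[OF assms(1)] L(2-4) edge_sym[OF t(3)] by blast
  moreover have "z \<in> V" "E z y" using L line_subset_V line_edge edge_sym by auto
  ultimately show ?thesis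
    using dist_eq_2I[OF _ t(1) _ t(3)] t(2) L(3) edge_sym by blast
qed

text \<open>Double count the pairs (w, t) with t a common neighbour of y and w other than z: each w has
  c 2 - 1 of them, all off L, and each t off L is at distance 2 from z, so it is adjacent to at
  most c 2 - 1 vertices w.\<close>

lemma card_le_nbrs_off_line:
  assumes psi_le_1: "\<And>C v. C \<in> \<C> \<Longrightarrow> v \<in> V - C \<Longrightarrow> psi C v \<le> 1" and "2 \<le> c 2"
    and L: "L \<in> \<C>" "y \<in> L" "z \<in> L" "y \<noteq> z"
    and W: "W \<subseteq> nbhd z" "\<And>w. w \<in> W \<Longrightarrow> d y w = 2"
    and Q: "\<And>w t. w \<in> W \<Longrightarrow> t \<in> nbhd y \<Longrightarrow> t \<in> nbhd w \<Longrightarrow> t \<noteq> z \<Longrightarrow> t \<in> Q"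
  shows "card W \<le> card (nbhd y \<inter> Q - L)"
proof -
  have yV: "y \<in> V" and yz: "E y z" using L line_subset_V line_edge by auto
  show ?thesis
  proof (rule card_le_card_by_double_counting[where R = "\<lambda>w t. t \<in> nbhd w \<and> t \<noteq> z"])
    show "finite W" using W(1) finite_nbhd finite_subset by blast
    show "finite (nbhd y \<inter> Q - L)" using finite_nbhd by simp
    show "0 < c 2 - 1" using \<open>2 \<le> c 2\<close> by simp
  next
    fix w assume w: "w \<in> W"
    then have wV: "w \<in> V" and zw: "E z w" and dyw: "d y w = 2"
      using W nbhd_subset_V by (auto simp: mem_nbhd_iff)
    then have "psi L w \<le> 1"
      using psi_le_1 L(1,2) dist_eq_1_iff[OF yV wV] line_edge by fastforce
    have "nbhd y \<inter> nbhd w - {z} \<subseteq> {t \<in> nbhd y \<inter> Q - L. t \<in> nbhd w \<and> t \<noteq> z}"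
    proof
      fix t assume t: "t \<in> nbhd y \<inter> nbhd w - {z}"
      then have "t \<notin> L"
        using nbrs_on_line_eq_if_psi_le_1[OF \<open>psi L w \<le> 1\<close> _ L(3) _ edge_sym[OF zw]]
        by (auto simp: mem_nbhd_iff)
      then show "t \<in> {t \<in> nbhd y \<inter> Q - L. t \<in> nbhd w \<and> t \<noteq> z}" using Q[OF w] t by blast
    qed
    moreover have "finite {t \<in> nbhd y \<inter> Q - L. t \<in> nbhd w \<and> t \<noteq> z}"
      using finite_nbhd by simp
    ultimately show "c 2 - 1 \<le> card {t \<in> nbhd y \<inter> Q - L. t \<in> nbhd w \<and> t \<noteq> z}"
      using card_common_nbrs_minus_one[OF yV wV dyw yz zw] card_mono by metis
  next
    fix t assume t: "t \<in> nbhd y \<inter> Q - L"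
    then have tV: "t \<in> V" and yt: "E y t" and "t \<notin> L"
      using edge_in_V by (auto simp: mem_nbhd_iff)
    moreover from this have "psi L t \<le> 1" using psi_le_1 L(1) by simp
    ultimately have "d z t = 2" using dist_eq_2_if_psi_le_1[OF _ L] by blast
    moreover have "{w \<in> W. t \<in> nbhd w \<and> t \<noteq> z} \<subseteq> nbhd z \<inter> nbhd t - {y}"
    proof
      fix w assume "w \<in> {w \<in> W. t \<in> nbhd w \<and> t \<noteq> z}"
      then have "w \<in> nbhd z" "E w t" "d y w = 2" using W by (auto simp: mem_nbhd_iff)
      then show "w \<in> nbhd z \<inter> nbhd t - {y}" using edge_sym by (auto simp: mem_nbhd_iff)
    qed
    moreover have "finite (nbhd z \<inter> nbhd t - {y})" using finite_nbhd by simp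
    ultimately show "card {w \<in> W. t \<in> nbhd w \<and> t \<noteq> z} \<le> c 2 - 1"
      using card_common_nbrs_minus_one[OF _ tV _ edge_sym[OF yz] yt] L line_subset_V card_mono
      by (metis subsetD)
  qed
qed

lemma c_step_if_psi_le_1:
  assumes psi_le_1: "\<And>C v. C \<in> \<C> \<Longrightarrow> v \<in> V - C \<Longrightarrow> psi C v \<le> 1" and c2: "2 \<le> c 2"
    and x: "x \<in> V" and L: "L \<in> \<C>" "y \<in> L" "z \<in> L"
    and dy: "d x y = i" and dz: "d x z = Suc i"
  shows "c i + card (L \<inter> sphere x i) \<le> c (Suc i)"
proof -
  have yV: "y \<in> V" and zV: "z \<in> V" using L line_subset_V by auto
  have yz: "E y z" using line_edge L dy dz by (metis n_not_Suc_n)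
  let ?W = "{w \<in> nbhd y. d x w + 1 = d x y}"
  have "card ?W \<le> card (nbhd z \<inter> sphere x i - L)"
  proof (rule card_le_nbrs_off_line[OF psi_le_1 c2 L(1,3,2)])
    show "z \<noteq> y" using dy dz by auto
    show "?W \<subseteq> nbhd y" by auto
  next
    fix w assume w: "w \<in> ?W"
    then have wV: "w \<in> V" and yw: "E y w" and dw: "d x w + 1 = i"
      using dy edge_in_V by (auto simp: mem_nbhd_iff)
    have "\<not> E z w"
    proof
      assume "E z w"
      then show False using dist_edge_le[OF x edge_sym[OF \<open>E z w\<close>]] dw dz by simp
    qed
    moreover have "z \<noteq> w" using dw dz by auto
    ultimately show "d z w = 2" using dist_eq_2I[OF zV wV edge_sym[OF yz] yw] by blast
    fix t assume "t \<in> nbhd z" "t \<in> nbhd w"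
    then have "t \<in> V" "E z t" "E w t" using edge_in_V by (auto simp: mem_nbhd_iff)
    then show "t \<in> sphere x i"
      using dist_edge_le[OF x \<open>E w t\<close>] dist_edge_le[OF x edge_sym[OF \<open>E z t\<close>]] dw dz
      unfolding sphere_def by auto
  qed
  moreover have "card ?W = c i" using card_nbhd_pred[OF x yV] dy by simp
  moreover have "card (nbhd z \<inter> sphere x i) = c (Suc i)"
    using card_nbhd_inter_sphere_pred[OF x zV dz] .
  moreover have "card (nbhd z \<inter> sphere x i) = card (L \<inter> sphere x i) + card (nbhd z \<inter> sphere x i - L)"
    using card_nbhd_inter_split_line[OF L(1,3)] dz by (simp add: sphere_def)
  ultimately show ?thesis by linarith
qed

lemma b_step_if_psi_le_1:
  assumes psi_le_1: "\<And>C v. C \<in> \<C> \<Longrightarrow> v \<in> V - C \<Longrightarrow> psi C v \<le> 1" and c2: "2 \<le> c 2"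
    and x: "x \<in> V" and L: "L \<in> \<C>" "y \<in> L" "z \<in> L"
    and dy: "d x y = i" and dz: "d x z = Suc i"
  shows "b (Suc i) + card (L \<inter> sphere x (Suc i)) \<le> b i"
proof -
  have yV: "y \<in> V" and zV: "z \<in> V" using L line_subset_V by auto
  have yz: "E y z" using line_edge L dy dz by (metis n_not_Suc_n)
  let ?W = "{w \<in> nbhd z. d x w = d x z + 1}"
  have "card ?W \<le> card (nbhd y \<inter> sphere x (Suc i) - L)"
  proof (rule card_le_nbrs_off_line[OF psi_le_1 c2 L(1,2,3)])
    show "y \<noteq> z" using dy dz by auto
    show "?W \<subseteq> nbhd z" by auto
  next
    fix w assume w: "w \<in> ?W"
    then have wV: "w \<in> V" and zw: "E z w" and dw: "d x w = Suc (Suc i)"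
      using dz edge_in_V by (auto simp: mem_nbhd_iff)
    have "\<not> E y w" using dist_edge_le[OF x, of y w] dw dy by auto
    moreover have "y \<noteq> w" using dw dy by auto
    ultimately show "d y w = 2" using dist_eq_2I[OF yV wV yz zw] by blast
    fix t assume "t \<in> nbhd y" "t \<in> nbhd w"
    then have "t \<in> V" "E y t" "E w t" using edge_in_V by (auto simp: mem_nbhd_iff)
    then show "t \<in> sphere x (Suc i)"
      using dist_edge_le[OF x \<open>E y t\<close>] dist_edge_le[OF x edge_sym[OF \<open>E w t\<close>]] dw dy
      unfolding sphere_def by auto
  qed
  moreover have "card ?W = b (Suc i)" using card_nbhd_succ[OF x zV] dz by simp
  moreover have "card (nbhd y \<inter> sphere x (Suc i)) = b i"
    using card_nbhd_inter_sphere_succ[OF x yV dy] .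
  moreover have "card (nbhd y \<inter> sphere x (Suc i))
      = card (L \<inter> sphere x (Suc i)) + card (nbhd y \<inter> sphere x (Suc i) - L)"
    using card_nbhd_inter_split_line[OF L(1,2)] dy by (simp add: sphere_def)
  ultimately show ?thesis by linarith
qed

lemma card_line_in_two_spheres:
  assumes x: "x \<in> V" and L: "L \<in> \<C>" "y \<in> L" "z \<in> L"
    and dy: "d x y = i" and dz: "d x z = Suc i"
  shows "card (L \<inter> sphere x i) + card (L \<inter> sphere x (Suc i)) = s"
proof -
  have "L \<subseteq> (L \<inter> sphere x i) \<union> (L \<inter> sphere x (Suc i))"
  proof
    fix t assume "t \<in> L"
    then have "t \<in> V" "d x t \<le> Suc i" "d x z \<le> d x t + 1"
      using dist_on_line[OF x L(1,2)] dist_on_line[OF x L(1) _ L(3)] line_subset_V[OF L(1)] dy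
      by auto
    then show "t \<in> (L \<inter> sphere x i) \<union> (L \<inter> sphere x (Suc i))"
      using \<open>t \<in> L\<close> dz unfolding sphere_def by auto
  qed
  then have "L = (L \<inter> sphere x i) \<union> (L \<inter> sphere x (Suc i))" by blast
  then have "card L = card ((L \<inter> sphere x i) \<union> (L \<inter> sphere x (Suc i)))" by simp
  also have "\<dots> = card (L \<inter> sphere x i) + card (L \<inter> sphere x (Suc i))"
    using finite_line[OF L(1)] by (intro card_Un_disjoint) (auto simp: sphere_def)
  finally show ?thesis using card_line[OF L(1)] by simp
qed

lemma b_c_step_if_psi_le_1:
  assumes psi_le_1: "\<And>C v. C \<in> \<C> \<Longrightarrow> v \<in> V - C \<Longrightarrow> psi C v \<le> 1" and c2: "2 \<le> c 2"
    and "i < diam"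
  shows "c i + b (Suc i) + s \<le> c (Suc i) + b i"
proof -
  obtain x y z where "x \<in> V" "y \<in> V" "z \<in> V" "d x y = i" "d x z = Suc i" "E y z"
    using \<open>i < diam\<close> by (rule edge_between_spheres)
  moreover obtain L where "L \<in> \<C>" "y \<in> L" "z \<in> L" using line_through_edge[OF \<open>E y z\<close>] .
  ultimately have "c i + card (L \<inter> sphere x i) \<le> c (Suc i)"
    "b (Suc i) + card (L \<inter> sphere x (Suc i)) \<le> b i"
    "card (L \<inter> sphere x i) + card (L \<inter> sphere x (Suc i)) = s"
    using c_step_if_psi_le_1[OF assms(1,2)] b_step_if_psi_le_1[OF assms(1,2)]
      card_line_in_two_spheres by blast+
  then show ?thesis by linarith
qed

lemma b_plus_dist_times_s_le_if_psi_le_1: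
  assumes psi_le_1: "\<And>C v. C \<in> \<C> \<Longrightarrow> v \<in> V - C \<Longrightarrow> psi C v \<le> 1" and c2: "2 \<le> c 2"
  shows "j \<le> diam \<Longrightarrow> b j + j * s \<le> c j + b 0"
proof (induction j)
  case (Suc j)
  then show ?case using b_c_step_if_psi_le_1[OF assms, of j] by simp
qed (simp add: c_0)

lemma diam_lt_if_psi_le_1:
  assumes psi_le_1: "\<And>C v. C \<in> \<C> \<Longrightarrow> v \<in> V - C \<Longrightarrow> psi C v \<le> 1" and c2: "2 \<le> c 2"
  shows "diam < 2 * m"
proof -
  have "diam * s \<le> c diam + b 0"
    using b_plus_dist_times_s_le_if_psi_le_1[OF assms, of diam] by simp
  also have "\<dots> \<le> 2 * (m * (s - 1))"
    using a_b_c_sum[of diam] valency_eq by simp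
  also have "\<dots> < 2 * m * s"
    using m_pos line_size_ge_2 by simp
  finally show ?thesis by (simp only: mult_less_cancel2)
qed

subsection \<open>Lines meeting neighbourhoods in a constant number of vertices\<close>

definition lines_towards :: "'a \<Rightarrow> 'a \<Rightarrow> 'a set set" where
  "lines_towards x y = {C \<in> lines_at y. \<exists>w\<in>C. d x w + 1 = d x y}"

lemma finite_lines_towards: "finite (lines_towards x y)"
  using finite_lines_at unfolding lines_towards_def by simp

lemma card_lines_towards_le: "z \<in> V \<Longrightarrow> card (lines_towards x z) \<le> m"
  using card_mono[OF finite_lines_at, of "lines_towards x z" z] card_lines_at
  unfolding lines_towards_def by simp

lemma card_line_inter_nbhd_minus:
  assumes psi_const: "\<And>C v. C \<in> \<C> \<Longrightarrow> v \<in> V - C \<Longrightarrow> psi C v \<noteq> 0 \<Longrightarrow> psi C v = \<psi>"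
    and "C \<in> \<C>" "v \<in> V" "v \<notin> C" "w \<in> C" "E v w"
  shows "card (C \<inter> nbhd v - {w}) = \<psi> - 1"
proof -
  have "w \<in> C \<inter> nbhd v" using assms by (simp add: mem_nbhd_iff)
  moreover from this have "psi C v = \<psi>"
    using psi_const assms finite_nbhd card_gt_0_iff unfolding psi_def by blast
  ultimately show ?thesis using finite_nbhd unfolding psi_def by simp
qed

lemma lines_towards_avoid_farther:
  assumes "x \<in> V" "D \<in> lines_towards x y" "d x z = Suc (d x y)"
  shows "z \<notin> D"
proof
  assume "z \<in> D"
  obtain w where "w \<in> D" "d x w + 1 = d x y"
    using assms(2) unfolding lines_towards_def by blast
  moreover have "D \<in> \<C>" using assms(2) unfolding lines_towards_def lines_at_def by simp
  ultimately have "E w z" using \<open>z \<in> D\<close> assms(3) line_edge by fastforce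
  then show False using dist_edge_le[OF assms(1)] \<open>d x w + 1 = d x y\<close> assms(3) by fastforce
qed

lemma nbr_on_line_towards_lies_on_line_towards:
  assumes x: "x \<in> V" and yz: "E y z" and dz: "d x z = Suc (d x y)"
    and L: "L \<in> \<C>" "y \<in> L" "z \<in> L"
    and D: "D \<in> lines_towards x y" and p: "p \<in> D \<inter> nbhd z - {y}"
  obtains M where "M \<in> lines_towards x z - {L}" "p \<in> M \<inter> nbhd y - {z}"
proof -
  have DC: "D \<in> \<C>" "y \<in> D" using D unfolding lines_towards_def lines_at_def by auto
  obtain w where w: "w \<in> D" "d x w + 1 = d x y"
    using D unfolding lines_towards_def by blast
  have zp: "E z p" and "p \<in> D" "p \<noteq> y" using p by (auto simp: mem_nbhd_iff)
  have "p \<noteq> w" using dist_edge_le[OF x edge_sym[OF zp]] w dz by auto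
  then have "d x p \<le> d x w + 1" using dist_edge_le[OF x] line_edge[OF DC(1) w(1) \<open>p \<in> D\<close>] by blast
  then have dp: "d x p + 1 = d x z" using dist_edge_le[OF x edge_sym[OF zp]] w dz by simp
  obtain M where M: "M \<in> \<C>" "z \<in> M" "p \<in> M" using line_through_edge[OF zp] .
  have "M \<noteq> L"
  proof
    assume "M = L"
    then have "D = L" using line_eqI[OF DC(1) L(1) \<open>p \<in> D\<close> DC(2)] M(3) L(2) \<open>p \<noteq> y\<close> by blast
    then show False using lines_towards_avoid_farther[OF x D dz] L(3) by simp
  qed
  then have "M \<in> lines_towards x z - {L}"
    using M dp unfolding lines_towards_def lines_at_def by auto
  moreover have "p \<in> M \<inter> nbhd y - {z}"
    using M line_edge[OF DC(1,2) \<open>p \<in> D\<close>] \<open>p \<noteq> y\<close> zp edge_irrefl by (auto simp: mem_nbhd_iff)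
  ultimately show thesis by (rule that)
qed

lemma card_UN_nbrs_on_lines_towards:
  assumes psi_const: "\<And>C v. C \<in> \<C> \<Longrightarrow> v \<in> V - C \<Longrightarrow> psi C v \<noteq> 0 \<Longrightarrow> psi C v = \<psi>"
    and x: "x \<in> V" and yz: "E y z" and dz: "d x z = Suc (d x y)"
  shows "card (\<Union>D\<in>lines_towards x y. D \<inter> nbhd z - {y}) = card (lines_towards x y) * (\<psi> - 1)"
proof -
  have zV: "z \<in> V" using yz edge_in_V by auto
  have D: "D \<in> \<C>" "z \<in> V - D" "y \<in> D" if "D \<in> lines_towards x y" for D
    using that lines_towards_avoid_farther[OF x _ dz] zV
    unfolding lines_towards_def lines_at_def by auto
  have "card (\<Union>D\<in>lines_towards x y. D \<inter> nbhd z - {y})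
      = (\<Sum>D\<in>lines_towards x y. card (D \<inter> nbhd z - {y}))"
  proof (rule card_UN_disjoint)
    show "\<forall>D\<in>lines_towards x y. \<forall>D'\<in>lines_towards x y. D \<noteq> D' \<longrightarrow>
        (D \<inter> nbhd z - {y}) \<inter> (D' \<inter> nbhd z - {y}) = {}"
    proof (intro ballI impI)
      fix D D' assume "D \<in> lines_towards x y" "D' \<in> lines_towards x y" "D \<noteq> D'"
      then show "(D \<inter> nbhd z - {y}) \<inter> (D' \<inter> nbhd z - {y}) = {}"
        using line_eqI[of D D' y] D by blast
    qed
  qed (simp_all add: finite_lines_towards finite_nbhd)
  also have "\<dots> = card (lines_towards x y) * (\<psi> - 1)"
    using card_line_inter_nbhd_minus[OF psi_const _ zV _ _ edge_sym[OF yz]] D by simp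
  finally show ?thesis .
qed

text \<open>The neighbours of z on the lines towards x through y lie on lines towards x through z other
  than the line yz, and each of those lines carries \<psi> - 1 of them.\<close>

lemma card_lines_towards_less:
  assumes psi_const: "\<And>C v. C \<in> \<C> \<Longrightarrow> v \<in> V - C \<Longrightarrow> psi C v \<noteq> 0 \<Longrightarrow> psi C v = \<psi>"
    and "2 \<le> \<psi>" and x: "x \<in> V" and yz: "E y z" and dz: "d x z = Suc (d x y)"
  shows "card (lines_towards x y) < card (lines_towards x z)"
proof -
  have yV: "y \<in> V" using yz edge_in_V by auto
  obtain L where L: "L \<in> \<C>" "y \<in> L" "z \<in> L" using line_through_edge[OF yz] .
  have "L \<in> lines_towards x z"
    using L dz unfolding lines_towards_def lines_at_def by auto
  moreover from this have "0 < card (lines_towards x z)"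
    using finite_lines_towards card_gt_0_iff by blast
  ultimately have card_L: "card (lines_towards x z - {L}) + 1 = card (lines_towards x z)"
    using card_Diff_singleton by simp
  let ?A = "\<lambda>D. D \<inter> nbhd z - {y}" and ?B = "\<lambda>M. M \<inter> nbhd y - {z}"
  have "card (lines_towards x y) * (\<psi> - 1) = card (\<Union>D\<in>lines_towards x y. ?A D)"
    using card_UN_nbrs_on_lines_towards[OF psi_const x yz dz] by simp
  also have "\<dots> \<le> card (\<Union>M\<in>lines_towards x z - {L}. ?B M)"
  proof (rule card_mono)
    show "finite (\<Union>M\<in>lines_towards x z - {L}. ?B M)"
      using finite_lines_towards finite_nbhd by simp
    show "(\<Union>D\<in>lines_towards x y. ?A D) \<subseteq> (\<Union>M\<in>lines_towards x z - {L}. ?B M)"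
    proof
      fix p assume "p \<in> (\<Union>D\<in>lines_towards x y. ?A D)"
      then obtain D where "D \<in> lines_towards x y" "p \<in> ?A D" by blast
      then obtain M where "M \<in> lines_towards x z - {L}" "p \<in> ?B M"
        by (rule nbr_on_line_towards_lies_on_line_towards[OF x yz dz L])
      then show "p \<in> (\<Union>M\<in>lines_towards x z - {L}. ?B M)" by blast
    qed
  qed
  also have "\<dots> \<le> (\<Sum>M\<in>lines_towards x z - {L}. card (?B M))"
    by (rule card_UN_le) (simp add: finite_lines_towards)
  also have "\<dots> = card (lines_towards x z - {L}) * (\<psi> - 1)"
  proof -
    have "card (?B M) = \<psi> - 1" if "M \<in> lines_towards x z - {L}" for M
    proof -
      have M: "M \<in> \<C>" "z \<in> M" "M \<noteq> L"
        using that unfolding lines_towards_def lines_at_def by auto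
      have "y \<noteq> z" using yz edge_irrefl by auto
      then have "y \<notin> M" using line_eqI[OF M(1) L(1) _ M(2) L(2,3)] M(3) by auto
      then show ?thesis using card_line_inter_nbhd_minus[OF psi_const M(1) yV _ M(2) yz] by simp
    qed
    then show ?thesis by simp
  qed
  finally show ?thesis using card_L \<open>2 \<le> \<psi>\<close> by simp
qed

lemma dist_le_card_lines_towards:
  assumes psi_const: "\<And>C v. C \<in> \<C> \<Longrightarrow> v \<in> V - C \<Longrightarrow> psi C v \<noteq> 0 \<Longrightarrow> psi C v = \<psi>"
    and "2 \<le> \<psi>" and x: "x \<in> V"
  shows "z \<in> V \<Longrightarrow> d x z \<le> card (lines_towards x z)"
proof (induction "d x z" arbitrary: z)
  case (Suc n)
  obtain y where "y \<in> V" "d x y = n" "E y z" using dist_SucE[OF x Suc.prems Suc.hyps(2)[symmetric]] .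
  then show ?case
    using Suc.hyps card_lines_towards_less[OF psi_const \<open>2 \<le> \<psi>\<close> x \<open>E y z\<close>] by fastforce
qed simp

lemma diam_le_if_psi_const:
  assumes psi_const: "\<And>C v. C \<in> \<C> \<Longrightarrow> v \<in> V - C \<Longrightarrow> psi C v \<noteq> 0 \<Longrightarrow> psi C v = \<psi>"
    and "2 \<le> \<psi>"
  shows "diam \<le> m"
proof -
  obtain x z where "x \<in> V" "z \<in> V" "d x z = diam" by (rule diam_attained)
  then show ?thesis
    using dist_le_card_lines_towards[OF assms] card_lines_towards_le le_trans by metis
qed

subsection \<open>Eigenvectors for -m sum to zero on lines\<close>

lemma sum_line_sums_at:
  fixes g :: "'a \<Rightarrow> real"
  assumes z: "z \<in> V" and eig: "(\<Sum>w\<in>nbhd z. g w) = - real m * g z"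
  shows "(\<Sum>C\<in>lines_at z. \<Sum>t\<in>C. g t) = 0"
proof -
  have "(\<Sum>w\<in>nbhd z. g w) = (\<Sum>C\<in>lines_at z. \<Sum>t\<in>C - {z}. g t)"
    unfolding nbhd_eq_UN_lines_at using finite_lines_at lines_at_disjoint finite_line
    by (intro sum.UNION_disjoint) (auto simp: lines_at_def)
  also have "\<dots> = (\<Sum>C\<in>lines_at z. (\<Sum>t\<in>C. g t) - g z)"
    using finite_line by (intro sum.cong) (auto simp: lines_at_def sum_diff1)
  also have "\<dots> = (\<Sum>C\<in>lines_at z. \<Sum>t\<in>C. g t) - real m * g z"
    using card_lines_at[OF z] by (simp add: sum_subtractf)
  finally show ?thesis using eig by simp
qed

text \<open>Summing g t times the previous identity over all vertices t gives the sum of the squared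
  line sums.\<close>

lemma eigenvector_line_sum_zero:
  fixes g :: "'a \<Rightarrow> real"
  assumes eig: "\<And>z. z \<in> V \<Longrightarrow> (\<Sum>w\<in>nbhd z. g w) = - real m * g z" and C: "C \<in> \<C>"
  shows "(\<Sum>t\<in>C. g t) = 0"
proof -
  let ?S = "\<lambda>C. \<Sum>t\<in>C. g t"
  have "(\<Sum>C\<in>\<C>. (?S C)\<^sup>2) = (\<Sum>C\<in>\<C>. \<Sum>t\<in>{t. t \<in> V \<and> t \<in> C}. g t * ?S C)"
  proof (rule sum.cong)
    fix C assume "C \<in> \<C>"
    then have "{t. t \<in> V \<and> t \<in> C} = C" using line_subset_V by auto
    then show "(?S C)\<^sup>2 = (\<Sum>t\<in>{t. t \<in> V \<and> t \<in> C}. g t * ?S C)"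
      by (simp add: power2_eq_square sum_distrib_right)
  qed simp
  also have "\<dots> = (\<Sum>t\<in>V. \<Sum>C\<in>lines_at t. g t * ?S C)"
    using sum.swap_restrict[OF finite_lines finite_V] unfolding lines_at_def by simp
  also have "\<dots> = 0"
    using sum_line_sums_at[OF _ eig] by (simp add: sum_distrib_left[symmetric])
  finally have "(\<Sum>C\<in>\<C>. (?S C)\<^sup>2) = 0" .
  then show ?thesis using sum_nonneg_eq_0_iff[OF finite_lines, of "\<lambda>C. (?S C)\<^sup>2"] C by simp
qed

lemma cosine_line_sum_zero:
  assumes "adj_eigenvalue V E (- real m)" "v \<in> V" "C \<in> \<C>"
  shows "(\<Sum>t\<in>C. cosine (- real m) (d v t)) = 0"
  using eigenvector_line_sum_zero[OF cosine_sum_nbhd[OF assms(1) _ assms(2)] assms(3)] diam_ge_2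
  by simp

lemma psi_cosine_eq:
  assumes "adj_eigenvalue V E (- real m)" and C: "C \<in> \<C>" and v: "v \<in> V" "v \<notin> C"
    and w: "w \<in> C" "E v w"
  shows "psi C v * cosine (- real m) 1 + (real s - psi C v) * cosine (- real m) 2 = 0"
proof -
  let ?u = "cosine (- real m)" and ?A = "C \<inter> nbhd v" and ?B = "C - nbhd v"
  have wV: "w \<in> V" using w edge_in_V by blast
  have dist_A: "d v t = 1" if "t \<in> ?A" for t
    using that dist_eq_1_iff[OF v(1)] edge_in_V by (auto simp: mem_nbhd_iff)
  have dist_B: "d v t = 2" if "t \<in> ?B" for t
  proof -
    have "t \<in> C" "\<not> E v t" "t \<noteq> w" using that w by (auto simp: mem_nbhd_iff)
    moreover have "t \<in> V" using line_subset_V C \<open>t \<in> C\<close> by blast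
    ultimately show ?thesis
      using dist_eq_2I[OF v(1) _ w(2) line_edge[OF C w(1)]] v(2) by fastforce
  qed
  have "(\<Sum>t\<in>C. ?u (d v t)) = (\<Sum>t\<in>?A. ?u (d v t)) + (\<Sum>t\<in>?B. ?u (d v t))"
    using finite_line[OF C] by (rule sum.Int_Diff)
  also have "\<dots> = (\<Sum>t\<in>?A. ?u 1) + (\<Sum>t\<in>?B. ?u 2)"
    using dist_A dist_B by (simp del: cosine.simps)
  finally have "(\<Sum>t\<in>C. ?u (d v t)) = card ?A * ?u 1 + card ?B * ?u 2" by simp
  moreover have "card ?A + card ?B = s"
    using card_Int_Diff[OF finite_line[OF C]] card_line[OF C] by simp
  then have "real (card ?B) = real s - card ?A" by (metis add_diff_cancel_left' of_nat_add)
  ultimately show ?thesis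
    using cosine_line_sum_zero[OF assms(1) v(1) C] unfolding psi_def by (simp del: cosine.simps)
qed

lemma psi_nonzero_eq:
  assumes eig: "adj_eigenvalue V E (- real m)"
    and C: "C \<in> \<C>" "v \<in> V - C" "psi C v \<noteq> 0" and C': "C' \<in> \<C>" "v' \<in> V - C'" "psi C' v' \<noteq> 0"
  shows "psi C v = psi C' v'"
proof -
  have nbr: "\<exists>w\<in>C. E v w" if "psi C v \<noteq> 0" for C v
  proof -
    have "C \<inter> nbhd v \<noteq> {}" using that unfolding psi_def by auto
    then show ?thesis by (auto simp: mem_nbhd_iff)
  qed
  let ?u = "cosine (- real m)"
  have eq: "psi C v * ?u 1 + (real s - psi C v) * ?u 2 = 0"
    "psi C' v' * ?u 1 + (real s - psi C' v') * ?u 2 = 0"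
    using psi_cosine_eq[OF eig] C C' nbr by blast+
  have "?u 1 \<noteq> 0" using m_pos valency_pos by simp
  then have "?u 1 \<noteq> ?u 2" using eq(1) line_size_ge_2 by (auto simp del: cosine.simps simp: algebra_simps)
  moreover have "(real (psi C v) - psi C' v') * (?u 1 - ?u 2) = 0"
    using eq by (simp del: cosine.simps add: algebra_simps)
  ultimately show ?thesis by simp
qed

lemma diam_lt_square:
  assumes eig: "adj_eigenvalue V E (- real m)" and "2 \<le> m" and c2: "2 \<le> c 2"
  shows "diam < m\<^sup>2"
proof -
  have "2 * m \<le> m\<^sup>2" using \<open>2 \<le> m\<close> by (simp add: power2_eq_square)
  show ?thesis
  proof (cases "\<exists>C\<in>\<C>. \<exists>v\<in>V - C. 2 \<le> psi C v")
    case True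
    then obtain C v where Cv: "C \<in> \<C>" "v \<in> V - C" "2 \<le> psi C v" by blast
    have "psi C' v' = psi C v" if "C' \<in> \<C>" "v' \<in> V - C'" "psi C' v' \<noteq> 0" for C' v'
      using psi_nonzero_eq[OF eig that Cv(1,2)] Cv(3) by simp
    then have "diam \<le> m" by (rule diam_le_if_psi_const[OF _ Cv(3)])
    then show ?thesis using \<open>2 * m \<le> m\<^sup>2\<close> m_pos by linarith
  next
    case False
    have "psi C v \<le> 1" if "C \<in> \<C>" "v \<in> V - C" for C v
    proof -
      have "psi C v < 2" using False that by (simp add: not_le)
      then show ?thesis by simp
    qed
    then have "diam < 2 * m" by (rule diam_lt_if_psi_le_1[OF _ c2])
    then show ?thesis using \<open>2 * m \<le> m\<^sup>2\<close> by linarith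
  qed
qed

end

lemma (in distance_regular_graph) geometric_drg_if_geometric:
  assumes "geometric V E (b 0) (- real m)" "0 < m" "2 \<le> diam"
  obtains \<C> s where "geometric_drg V E b c m \<C> s"
proof -
  have "\<exists>\<C>. (\<forall>C\<in>\<C>. delsarte_clique V E (b 0) (- real m) C)
      \<and> (\<forall>x y. E x y \<longrightarrow> (\<exists>!C. C \<in> \<C> \<and> x \<in> C \<and> y \<in> C))"
    using assms(1) unfolding geometric_def by (rule conjunct2)
  then obtain \<C> where delsarte: "\<forall>C\<in>\<C>. delsarte_clique V E (b 0) (- real m) C"
    and unique: "\<forall>x y. E x y \<longrightarrow> (\<exists>!C. C \<in> \<C> \<and> x \<in> C \<and> y \<in> C)"
    by (elim exE conjE)
  have "0 < diam" using assms(3) by simp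
  then obtain x y z where "x \<in> V" "y \<in> V" "z \<in> V" "d x y = 0" "d x z = Suc 0" "E y z"
    by (rule edge_between_spheres)
  then obtain C0 where "C0 \<in> \<C>"
    using ex1_implies_ex[OF unique[rule_format, OF \<open>E y z\<close>]] by blast
  have size: "real (card C) = 1 + real (b 0) / real m" if "C \<in> \<C>" for C
    using delsarte that unfolding delsarte_clique_def by simp
  have "geometric_drg V E b c m \<C> (card C0)"
  proof (intro geometric_drg.intro geometric_drg_axioms.intro)
    show "distance_regular_graph V E b c" by (rule distance_regular_graph_axioms)
    show "C \<in> \<C> \<Longrightarrow> is_clique V E C" for C
      using delsarte unfolding delsarte_clique_def by blast
    show "C \<in> \<C> \<Longrightarrow> card C = card C0" for C using size[of C] size[OF \<open>C0 \<in> \<C>\<close>] by simp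
    show "real (card C0) = 1 + real (b 0) / real m" by (rule size[OF \<open>C0 \<in> \<C>\<close>])
    show "E x y \<Longrightarrow> \<exists>!C. C \<in> \<C> \<and> x \<in> C \<and> y \<in> C" for x y
      using unique by blast
    show "0 < m" by (rule assms(2))
    show "2 \<le> diam" by (rule assms(3))
  qed
  then show thesis by (rule that)
qed

theorem proposition4p3:
  fixes V :: "'a set" and E :: "'a \<Rightarrow> 'a \<Rightarrow> bool"
    and b c :: "nat \<Rightarrow> nat" and m :: nat
  assumes "m \<ge> 2"
    and "distance_regular V E b c"
    and "smallest_eigenvalue V E (- real m)"
    and "geometric V E (b 0) (- real m)"
    and "diameter V E \<ge> 2"
    and "c 2 \<ge> 2"
  shows "diameter V E < m ^ 2"
proof -
  interpret distance_regular_graph V E b c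
    using assms(2) unfolding distance_regular_def by unfold_locales auto
  have "0 < m" using assms(1) by simp
  obtain \<C> s where "geometric_drg V E b c m \<C> s"
    by (rule geometric_drg_if_geometric[OF assms(4) \<open>0 < m\<close> assms(5)])
  then interpret geometric_drg V E b c m \<C> s .
  show ?thesis
    using diam_lt_square assms(1,3,6) unfolding smallest_eigenvalue_def by blast
qed

end
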